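(* Let $A$ be a real symmetric matrix of tropical rank two. Then the symmetric tropical rank of $A$ is greater than two if and only if some principal $3\times 3$ submatrix of $A$ is not symmetrically tropically singular.
   Context: For an $r\times r$ submatrix of a real matrix $A$ with row index set $I$ and column index set $J$, each bijection $\rho:I\to J$ has value $\sum_{i\in I}A_{i,\rho(i)}$; the submatrix is tropically singular if the minimum value is attained by at least two distinct bijections. For symmetric $A$, the submatrix is symmetrically tropically singular if the minimum is attained by at least two distinct monomials $\prod_{i\in I}X_{i,\rho(i)}$, where variables are subject to the identification $X_{i,j}=X_{j,i}$. The tropical rank (resp. symmetric tropical rank) of $A$ is the largest $r$ such that $A$ has an $r\times r$ submatrix (arbitrary row and column sets) that is not tropically singular (resp. not symmetrically tropically singular). A principal submatrix is one with equal row and column index sets. *)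

theory Defs
  imports Complex_Main "HOL-Library.Multiset"
begin

text \<open>An n x n real matrix is a function A :: nat => nat => real, with indices
  ranging over {..<n}.  A submatrix is given by row index set I and column index set J.\<close>

definition bij_value :: "(nat \<Rightarrow> nat \<Rightarrow> real) \<Rightarrow> nat set \<Rightarrow> (nat \<Rightarrow> nat) \<Rightarrow> real" where
  "bij_value A I \<rho> = (\<Sum>i\<in>I. A i (\<rho> i))"

definition is_min_bij :: "(nat \<Rightarrow> nat \<Rightarrow> real) \<Rightarrow> nat set \<Rightarrow> nat set \<Rightarrow> (nat \<Rightarrow> nat) \<Rightarrow> bool" where
  "is_min_bij A I J \<rho> \<longleftrightarrow> bij_betw \<rho> I J \<and>
     (\<forall>\<sigma>. bij_betw \<sigma> I J \<longrightarrow> bij_value A I \<rho> \<le> bij_value A I \<sigma>)"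

definition trop_singular :: "(nat \<Rightarrow> nat \<Rightarrow> real) \<Rightarrow> nat set \<Rightarrow> nat set \<Rightarrow> bool" where
  "trop_singular A I J \<longleftrightarrow> (\<exists>\<rho>1 \<rho>2. is_min_bij A I J \<rho>1 \<and> is_min_bij A I J \<rho>2 \<and>
       (\<exists>i\<in>I. \<rho>1 i \<noteq> \<rho>2 i))"

text \<open>The monomial prod_{i in I} X_{i, rho i}, with X_{i,j} = X_{j,i}: a multiset of
  unordered pairs {i, rho i}.\<close>
definition sym_monomial :: "nat set \<Rightarrow> (nat \<Rightarrow> nat) \<Rightarrow> nat set multiset" where
  "sym_monomial I \<rho> = image_mset (\<lambda>i. {i, \<rho> i}) (mset_set I)"

definition sym_trop_singular :: "(nat \<Rightarrow> nat \<Rightarrow> real) \<Rightarrow> nat set \<Rightarrow> nat set \<Rightarrow> bool" where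
  "sym_trop_singular A I J \<longleftrightarrow> (\<exists>\<rho>1 \<rho>2. is_min_bij A I J \<rho>1 \<and> is_min_bij A I J \<rho>2 \<and>
       sym_monomial I \<rho>1 \<noteq> sym_monomial I \<rho>2)"

definition symmetric_mat :: "nat \<Rightarrow> (nat \<Rightarrow> nat \<Rightarrow> real) \<Rightarrow> bool" where
  "symmetric_mat n A \<longleftrightarrow> (\<forall>i<n. \<forall>j<n. A i j = A j i)"

definition trop_rank :: "nat \<Rightarrow> (nat \<Rightarrow> nat \<Rightarrow> real) \<Rightarrow> nat" where
  "trop_rank n A = Max {r. \<exists>I J. I \<subseteq> {..<n} \<and> J \<subseteq> {..<n} \<and> card I = r \<and> card J = r \<and>
       \<not> trop_singular A I J}"

definition sym_trop_rank :: "nat \<Rightarrow> (nat \<Rightarrow> nat \<Rightarrow> real) \<Rightarrow> nat" where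
  "sym_trop_rank n A = Max {r. \<exists>I J. I \<subseteq> {..<n} \<and> J \<subseteq> {..<n} \<and> card I = r \<and> card J = r \<and>
       \<not> sym_trop_singular A I J}"

end

theory Submission
  imports Defs
begin

text \<open>If two bijections f, g with the same symmetric monomial disagree at x, the
  factor X_{x, f x} of f must equal a factor X_{y, g y} with y \<noteq> x, so y = f x and
  g (f x) = x.  Hence f and g are mutually inverse where they disagree, and the set
  where they disagree is f-invariant.

  Now let I \<times> J be symmetrically nonsingular but tropically singular, with optimal
  bijections f, g disagreeing at i, and put j = f i, k = g i, so that f k = i.  If
  f j = k, then f permutes the principal block {k, i, j}; splicing optimal bijections
  of the block into f keeps f optimal for I \<times> J, so the block inherits symmetric
  nonsingularity.  Otherwise the 3 \<times> 3 block {k, i, j} \<times> f ` {k, i, j} is tropically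
  singular because the tropical rank is two, and splicing a second optimal bijection
  of it into f gives an optimal bijection of I \<times> J disagreeing with f somewhere, but
  only inside {k, i, j}.  That would be a nonempty f-invariant subset of {k, i, j},
  impossible since f walks k \<mapsto> i \<mapsto> j \<mapsto> f j \<notin> {k, i, j}.\<close>

lemma sym_monomial_eq_partner:
  assumes "finite I" "sym_monomial I f = sym_monomial I g" "x \<in> I" "f x \<noteq> g x"
  shows "f x \<in> I" "g (f x) = x"
proof -
  have "{x, f x} \<in># sym_monomial I f"
    using assms(1,3) by (simp add: sym_monomial_def)
  then have "{x, f x} \<in># sym_monomial I g"
    using assms(2) by simp
  then obtain y where y: "y \<in> I" "{y, g y} = {x, f x}"
    using assms(1) by (auto simp: sym_monomial_def)
  have "y \<noteq> x"
  proof
    assume "y = x"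
    with y(2) have "g x = f x" by (metis doubleton_eq_iff insert_absorb2)
    with assms(4) show False by simp
  qed
  with y show "f x \<in> I" "g (f x) = x" by (auto simp: doubleton_eq_iff)
qed

lemma sym_monomial_eq_disagreement_invariant:
  assumes "finite I" "inj_on f I" "sym_monomial I f = sym_monomial I g"
  shows "f ` {x \<in> I. f x \<noteq> g x} \<subseteq> {x \<in> I. f x \<noteq> g x}"
proof (rule image_subsetI)
  fix x assume "x \<in> {x \<in> I. f x \<noteq> g x}"
  then have x: "x \<in> I" "f x \<noteq> g x" by simp_all
  note fx = sym_monomial_eq_partner[OF assms(1,3) x]
  note gx = sym_monomial_eq_partner[OF assms(1) assms(3)[symmetric] x(1) x(2)[symmetric]]
  have "f (f x) \<noteq> g (f x)"
  proof
    assume "f (f x) = g (f x)"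
    with fx gx have "f (f x) = f (g x)" by simp
    with assms(2) fx(1) gx(1) x have "f x = g x" by (meson inj_on_def)
    with x(2) show False by simp
  qed
  with fx(1) show "f x \<in> {x \<in> I. f x \<noteq> g x}" by simp
qed

lemma bij_betw_override_on:
  assumes "bij_betw f I J" "R \<subseteq> I" "bij_betw t R (f ` R)"
  shows "bij_betw (override_on f t R) I J"
proof -
  have "bij_betw f (I - R) (J - f ` R)"
    using assms(1,2) by (intro bij_betw_DiffI) (auto simp: bij_betw_def inj_on_subset)
  then have "bij_betw (override_on f t R) (R \<union> (I - R)) (f ` R \<union> (J - f ` R))"
    unfolding override_on_def by (intro bij_betw_disjoint_Un[OF assms(3)]) auto
  moreover have "f ` R \<subseteq> J" using assms(1,2) by (auto simp: bij_betw_def)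
  ultimately show ?thesis using assms(2) by (simp add: Un_absorb1 Un_Diff_cancel)
qed

lemma bij_value_override_on:
  assumes "finite I" "R \<subseteq> I"
  shows "bij_value A I (override_on f t R) = bij_value A R t + bij_value A (I - R) f"
proof -
  have "bij_value A I (override_on f t R) =
      bij_value A R (override_on f t R) + bij_value A (I - R) (override_on f t R)"
    unfolding bij_value_def using assms by (metis add.commute sum.subset_diff)
  then show ?thesis by (simp add: bij_value_def)
qed

lemma sym_monomial_override_on:
  assumes "finite I" "R \<subseteq> I"
  shows "sym_monomial I (override_on f t R) = sym_monomial R t + sym_monomial (I - R) f"
proof -
  have "mset_set I = mset_set R + mset_set (I - R)"
    using assms mset_set_Union[of R "I - R"] by (metis Diff_disjoint Un_Diff_cancel
      Un_absorb1 finite_Diff finite_subset)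
  then show ?thesis
    unfolding sym_monomial_def using assms
    by (auto intro!: arg_cong2[where f = "(+)"] image_mset_cong simp: finite_subset)
qed

lemma is_min_bij_override_on:
  assumes "is_min_bij A I J f" "finite I" "R \<subseteq> I" "is_min_bij A R (f ` R) t"
  shows "is_min_bij A I J (override_on f t R)"
proof -
  have f: "bij_betw f I J" and t: "bij_betw t R (f ` R)"
    using assms(1,4) by (simp_all add: is_min_bij_def)
  have "bij_betw f R (f ` R)"
    using f assms(3) by (auto simp: bij_betw_def intro: inj_on_subset)
  then have "bij_value A R t \<le> bij_value A R f"
    using assms(4) by (simp add: is_min_bij_def)
  moreover have "override_on f f R = f" by (simp add: override_on_def)
  ultimately have "bij_value A I (override_on f t R) \<le> bij_value A I f"
    using bij_value_override_on[OF assms(2,3), of A f t]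
      bij_value_override_on[OF assms(2,3), of A f f] by simp
  with assms(1) bij_betw_override_on[OF f assms(3) t] show ?thesis
    by (force simp: is_min_bij_def)
qed

lemma not_sym_trop_singular_image_block:
  assumes "\<not> sym_trop_singular A I J" "finite I" "is_min_bij A I J f" "R \<subseteq> I"
  shows "\<not> sym_trop_singular A R (f ` R)"
proof
  assume "sym_trop_singular A R (f ` R)"
  then obtain s1 s2 where s: "is_min_bij A R (f ` R) s1" "is_min_bij A R (f ` R) s2"
    "sym_monomial R s1 \<noteq> sym_monomial R s2"
    unfolding sym_trop_singular_def by blast
  have "sym_monomial I (override_on f s1 R) = sym_monomial I (override_on f s2 R)"
    using assms(1) is_min_bij_override_on[OF assms(3,2,4)] s(1,2)
    unfolding sym_trop_singular_def by blast
  with s(3) show False by (simp add: sym_monomial_override_on[OF assms(2,4)])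
qed

lemma trop_singular_image_block_invariant_subset:
  assumes "\<not> sym_trop_singular A I J" "finite I" "is_min_bij A I J f" "R \<subseteq> I"
    and "trop_singular A R (f ` R)"
  obtains D where "D \<subseteq> R" "D \<noteq> {}" "f ` D \<subseteq> D"
proof -
  obtain t1 t2 y where "is_min_bij A R (f ` R) t1" "is_min_bij A R (f ` R) t2"
    "y \<in> R" "t1 y \<noteq> t2 y"
    using assms(5) unfolding trop_singular_def by blast
  then obtain t where t: "is_min_bij A R (f ` R) t" "t y \<noteq> f y" "y \<in> R"
    by metis
  define p where "p = override_on f t R"
  have "is_min_bij A I J p"
    unfolding p_def by (rule is_min_bij_override_on[OF assms(3,2,4) t(1)])
  then have "sym_monomial I f = sym_monomial I p"
    using assms(1,3) unfolding sym_trop_singular_def by blast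
  moreover have "inj_on f I"
    using assms(3) by (simp add: is_min_bij_def bij_betw_def)
  ultimately have "f ` {x \<in> I. f x \<noteq> p x} \<subseteq> {x \<in> I. f x \<noteq> p x}"
    using sym_monomial_eq_disagreement_invariant assms(2) by blast
  moreover have "{x \<in> I. f x \<noteq> p x} \<subseteq> R" by (auto simp: p_def override_on_def)
  moreover have "y \<in> {x \<in> I. f x \<noteq> p x}" using t assms(4) by (auto simp: p_def)
  ultimately show ?thesis using that by blast
qed

lemma principal_block_not_sym_trop_singular:
  assumes "finite I" "\<not> sym_trop_singular A I J" "trop_singular A I J"
    and "\<And>R S. R \<subseteq> I \<Longrightarrow> S \<subseteq> J \<Longrightarrow> card R = 3 \<Longrightarrow> card S = 3 \<Longrightarrow> trop_singular A R S"
  obtains R where "R \<subseteq> I" "card R = 3" "\<not> sym_trop_singular A R R"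
proof -
  obtain f g i where f: "is_min_bij A I J f" and g: "is_min_bij A I J g"
    and i: "i \<in> I" "f i \<noteq> g i"
    using assms(3) unfolding trop_singular_def by blast
  have bf: "bij_betw f I J" using f by (simp add: is_min_bij_def)
  have fg: "sym_monomial I f = sym_monomial I g"
    using assms(2) f g unfolding sym_trop_singular_def by blast
  define j k where "j = f i" and "k = g i"
  have j: "j \<in> I" "g j = i"
    using sym_monomial_eq_partner[OF assms(1) fg i] by (simp_all add: j_def)
  have k: "k \<in> I" "f k = i"
    using sym_monomial_eq_partner[OF assms(1) fg[symmetric] i(1) i(2)[symmetric]]
    by (simp_all add: k_def)
  have "j \<in> {x \<in> I. f x \<noteq> g x}"
    using sym_monomial_eq_disagreement_invariant[OF assms(1) _ fg] bf i
    by (auto simp: j_def bij_betw_def)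
  then have fj: "f j \<in> I" "g (f j) = j"
    using sym_monomial_eq_partner[OF assms(1) fg] by auto
  define R where "R = {k, i, j}"
  have distinct: "k \<noteq> i" "i \<noteq> j" "j \<noteq> k"
    using i j k by (auto simp: j_def k_def)
  then have R: "R \<subseteq> I" "card R = 3"
    using i j k by (auto simp: R_def)
  have "f j \<noteq> i" "f j \<noteq> j"
    using bf distinct j k fj unfolding bij_betw_def inj_on_def by metis+
  then consider "f j = k" | "f j \<notin> R" by (auto simp: R_def)
  then show ?thesis
  proof cases
    case 1
    then have "f ` R = R" using k by (auto simp: R_def j_def)
    then show ?thesis
      using that R not_sym_trop_singular_image_block[OF assms(2,1) f R(1)] by simp
  next
    case 2
    have "card (f ` R) = 3" "f ` R \<subseteq> J"
      using R bf by (auto simp: bij_betw_def card_image inj_on_subset)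
    then have "trop_singular A R (f ` R)" using assms(4) R by blast
    then obtain D where D: "D \<subseteq> R" "D \<noteq> {}" "f ` D \<subseteq> D"
      using trop_singular_image_block_invariant_subset[OF assms(2,1) f R(1)] by blast
    have "j \<notin> D" using 2 D by auto
    then have "i \<notin> D" using D by (auto simp: j_def)
    then have "k \<notin> D" using D k by auto
    with \<open>j \<notin> D\<close> \<open>i \<notin> D\<close> D show ?thesis by (auto simp: R_def)
  qed
qed

lemma finite_square_submatrix_sizes:
  fixes n :: nat and P :: "nat set \<Rightarrow> nat set \<Rightarrow> bool"
  shows "finite {r. \<exists>I J. I \<subseteq> {..<n} \<and> J \<subseteq> {..<n} \<and> card I = r \<and> card J = r \<and> P I J}"
  by (rule finite_subset[of _ "{..n}"])
    (auto dest: card_mono[OF finite_lessThan] simp: atMost_iff)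

lemma trop_singular_if_trop_rank_less:
  assumes "I \<subseteq> {..<n}" "J \<subseteq> {..<n}" "card I = card J" "trop_rank n A < card I"
  shows "trop_singular A I J"
proof (rule ccontr)
  assume "\<not> trop_singular A I J"
  then have "card I \<le> trop_rank n A"
    using assms(1-3) unfolding trop_rank_def by (intro Max_ge[OF finite_square_submatrix_sizes]) auto
  with assms(4) show False by simp
qed

lemma card_le_sym_trop_rank:
  assumes "I \<subseteq> {..<n}" "J \<subseteq> {..<n}" "card I = card J" "\<not> sym_trop_singular A I J"
  shows "card I \<le> sym_trop_rank n A"
  using assms unfolding sym_trop_rank_def by (intro Max_ge[OF finite_square_submatrix_sizes]) auto

lemma sym_trop_rank_attained:
  obtains I J where "I \<subseteq> {..<n}" "J \<subseteq> {..<n}" "card I = sym_trop_rank n A"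
    "card J = sym_trop_rank n A" "\<not> sym_trop_singular A I J"
proof -
  have "\<not> sym_trop_singular A {} {}"
    by (simp add: sym_trop_singular_def sym_monomial_def)
  then have "sym_trop_rank n A \<in> {r. \<exists>I J. I \<subseteq> {..<n} \<and> J \<subseteq> {..<n} \<and> card I = r \<and>
      card J = r \<and> \<not> sym_trop_singular A I J}"
    unfolding sym_trop_rank_def by (intro Max_in[OF finite_square_submatrix_sizes]) force+
  with that show ?thesis by blast
qed

theorem proposition3:
  fixes n :: nat and A :: "nat \<Rightarrow> nat \<Rightarrow> real"
  assumes "symmetric_mat n A"
    and "trop_rank n A = 2"
  shows "sym_trop_rank n A > 2 \<longleftrightarrow>
    (\<exists>I. I \<subseteq> {..<n} \<and> card I = 3 \<and> \<not> sym_trop_singular A I I)"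
proof
  assume "sym_trop_rank n A > 2"
  obtain I J where IJ: "I \<subseteq> {..<n}" "J \<subseteq> {..<n}" "card I = sym_trop_rank n A"
    "card J = sym_trop_rank n A" "\<not> sym_trop_singular A I J"
    by (rule sym_trop_rank_attained)
  have "finite I" using IJ(1) finite_subset by blast
  moreover note \<open>\<not> sym_trop_singular A I J\<close>
  moreover have "trop_singular A I J"
    using IJ \<open>sym_trop_rank n A > 2\<close> assms(2) by (intro trop_singular_if_trop_rank_less) auto
  moreover have "trop_singular A R S"
    if "R \<subseteq> I" "S \<subseteq> J" "card R = 3" "card S = 3" for R S
    using that IJ(1,2) assms(2) by (intro trop_singular_if_trop_rank_less) auto
  ultimately obtain R where "R \<subseteq> I" "card R = 3" "\<not> sym_trop_singular A R R"
    by (rule principal_block_not_sym_trop_singular)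
  with IJ(1) show "\<exists>I. I \<subseteq> {..<n} \<and> card I = 3 \<and> \<not> sym_trop_singular A I I" by blast
next
  assume "\<exists>I. I \<subseteq> {..<n} \<and> card I = 3 \<and> \<not> sym_trop_singular A I I"
  then obtain I where "I \<subseteq> {..<n}" "card I = 3" "\<not> sym_trop_singular A I I" by blast
  then have "3 \<le> sym_trop_rank n A" by (metis card_le_sym_trop_rank)
  then show "sym_trop_rank n A > 2" by simp
qed

end
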